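(* Let $\mathcal K'$ be a tame shrinking of a tame topological Kuranishi atlas $\mathcal K$, with domains $U'_I\subset U_I$. Then the map $\iota:|\mathcal K'|\to|\mathcal K|$ induced by the inclusions $U'_I\hookrightarrow U_I$ (i.e. $\pi_{\mathcal K'}(I,x)\mapsto\pi_{\mathcal K}(I,x)$) is well defined and injective.
   Context: Notation: for subsets $V'\subset V$ of a topological space, $V'\sqsubset V$ means the closure of $V'$ in $V$ is compact. $X$ is a compact metrizable space. Charts: a topological Kuranishi chart for $X$ with open footprint $F\subset X$ is a tuple $\mathbf K=(U,\mathbb E,\mathfrak s,\psi)$ where $U$ is a separable, locally compact, metrizable space; $\mathbb E$ is a separable, locally compact, metrizable space with continuous maps $\mathrm{pr}:\mathbb E\to U$ and $0:U\to\mathbb E$ with $\mathrm{pr}\circ0=\mathrm{id}_U$; $\mathfrak s:U\to\mathbb E$ is continuous with $\mathrm{pr}\circ\mathfrak s=\mathrm{id}_U$; and $\psi$ is a homeomorphism from $\mathfrak s^{-1}(0):=\{x\in U:\mathfrak s(x)=0(x)\}$ onto $F$. For open $U'\subset U$ the restriction is $\mathbf K|_{U'}:=(U',\mathrm{pr}^{-1}(U'),\mathfrak s|_{U'},\psi|_{U'\cap\mathfrak s^{-1}(0)})$. Coordinate changes: for charts $\mathbf K_I,\mathbf K_J$ with $F_I\cap F_J\neq\emptyset$, a coordinate change $\widehat\Phi_{IJ}:\mathbf K_I\to\mathbf K_J$ consists of an open set $U_{IJ}\subset U_I$ with $U_{IJ}\cap\mathfrak s_I^{-1}(0_I)=\psi_I^{-1}(F_I\cap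 F_J)$ and a topological embedding $\widehat\Phi_{IJ}:\mathrm{pr}_I^{-1}(U_{IJ})\to\mathbb E_J$ such that there is a topological embedding $\phi_{IJ}:U_{IJ}\to U_J$ with $\mathrm{pr}_J\circ\widehat\Phi_{IJ}=\phi_{IJ}\circ\mathrm{pr}_I$, $0_J\circ\phi_{IJ}=\widehat\Phi_{IJ}\circ0_I$ and $\mathfrak s_J\circ\phi_{IJ}=\widehat\Phi_{IJ}\circ\mathfrak s_I$ on $U_{IJ}$, and $\phi_{IJ}=\psi_J^{-1}\circ\psi_I$ on $U_{IJ}\cap\mathfrak s_I^{-1}(0_I)$. Atlases: a covering family of basic charts is a finite family $(\mathbf K_i)_{i=1,\dots,N}$ of charts whose footprints cover $X$; $\mathcal I_{\mathcal K}$ is the set of nonempty $I\subset\{1,\dots,N\}$ with $F_I:=\bigcap_{i\in I}F_i\neq\emptyset$. Transition data consist of a chart $\mathbf K_J$ with footprint $F_J$ for each $J\in\mathcal I_{\mathcal K}$ with $|J|\ge2$ (and $\mathbf K_{\{i\}}:=\mathbf K_i$), and a coordinate change $\widehat\Phi_{IJ}:\mathbf K_I\to\mathbf K_J$ for all $I\subsetneq J$ in $\mathcal I_{\mathcal K}$. We set $U_{II}:=U_I$, $\phi_{II}:=\mathrm{id}_{U_I}$. For $I\subsetneq J\subsetneq K$ let $U_{IJK}:=U_{IJ}\cap\phi_{IJ}^{-1}(U_{JK})$. The triple satisfies the weak cocycle condition if $\widehat\Phi_{JK}\circ\widehat\Phi_{IJ}=\widehat\Phi_{IK}$ on $\mathrm{pr}_I^{-1}(U_{IJK}\cap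 U_{IK})$; the cocycle condition if in addition $U_{IJK}\subset U_{IK}$; the strong cocycle condition if in addition $U_{IJK}=U_{IK}$. A weak topological Kuranishi atlas $\mathcal K$ is a covering family with transition data satisfying the weak cocycle condition for all such triples; a topological Kuranishi atlas is one satisfying the cocycle condition for all triples. Filtrations: a weak topological Kuranishi atlas is filtered if it is equipped with closed subsets $\mathbb E_{IJ}\subset\mathbb E_J$ for all $J\in\mathcal I_{\mathcal K}$ and $I\subset J$ (including $I=\emptyset$) such that (i) $\mathbb E_{JJ}=\mathbb E_J$ and $\mathbb E_{\emptyset J}=\mathrm{im}\,0_J$; (ii) $\widehat\Phi_{JK}(\mathrm{pr}_J^{-1}(U_{JK})\cap\mathbb E_{IJ})=\mathbb E_{IK}\cap\mathrm{pr}_K^{-1}(\mathrm{im}\,\phi_{JK})$ for $I\subset J\subsetneq K$; (iii) $\mathbb E_{IJ}\cap\mathbb E_{HJ}=\mathbb E_{(I\cap H)J}$ for $I,H\subset J$; (iv) $\mathrm{im}\,\phi_{IJ}$ is an open subset of $\mathfrak s_J^{-1}(\mathbb E_{IJ})$ for $I\subsetneq J$. Tameness: a filtered weak topological Kuranishi atlas is tame if $U_{IJ}\cap U_{IK}=U_{I(J\cup K)}$ for all $I,J,K\in\mathcal I_{\mathcal K}$ with $I\subset J,K$ (where $U_{IL}:=\emptyset$ if $L\notin\mathcal I_{\mathcal K}$), and $\phi_{IJ}(U_{IK})=U_{JK}\cap\mathfrak s_J^{-1}(\mathbb E_{IJ})$ for all $I\subset J\subset K$ in $\mathcal I_{\mathcal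 K}$ (equalities of indices allowed). Virtual neighbourhood: for a topological Kuranishi atlas, $|\mathcal K|$ is the quotient of $\bigsqcup_{I\in\mathcal I_{\mathcal K}}U_I=\{(I,x):x\in U_I\}$ by the equivalence relation generated by $(I,x)\sim(J,\phi_{IJ}(x))$ for $I\subset J$, $x\in U_{IJ}$, with the quotient topology and projection $\pi_{\mathcal K}$. Shrinkings: a shrinking of a finite open cover $(F_i)_{i=1}^N$ of $X$ is a cover $(F'_i)_{i=1}^N$ of $X$ by open sets $F'_i\sqsubset F_i$ such that $F_I\neq\emptyset\Rightarrow F'_I:=\bigcap_{i\in I}F'_i\neq\emptyset$ for all $I$. A shrinking of a weak topological Kuranishi atlas $\mathcal K$ is a weak topological Kuranishi atlas $\mathcal K'$ with the same index set such that its footprint cover $(F'_i)$ is a shrinking of $(F_i)$, each chart is a restriction $\mathbf K'_I=\mathbf K_I|_{U'_I}$ to a precompact open $U'_I\sqsubset U_I$ with footprint $F'_I$, and each coordinate change $\widehat\Phi'_{IJ}$ is the restriction of $\widehat\Phi_{IJ}$ to the domain $U'_{IJ}:=U'_I\cap\phi_{IJ}^{-1}(U'_J)$. A tame shrinking is a shrinking which, with the filtration $\mathbb E'_{IJ}:=\mathbb E_{IJ}\cap\mathrm{pr}_J^{-1}(U'_J)$, is a tame topological Kuranishi atlas. *)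

theory Defs
  imports "HOL-Analysis.Analysis"
begin

text \<open>Charts are indexed by sets I of natural
numbers (subsets of {1..N}); all domains U_I live in one ambient type 'u, all
bundles E_I in one ambient type 'e (the disjoint union is tagged by I).
U_I is the topspace of kU K I, E_I the topspace of kE K I.\<close>

record ('x,'u,'e) katlas =
  kN    :: nat
  kF    :: "nat \<Rightarrow> 'x set"
  kU    :: "nat set \<Rightarrow> 'u topology"
  kE    :: "nat set \<Rightarrow> 'e topology"
  kpr   :: "nat set \<Rightarrow> 'e \<Rightarrow> 'u"
  kzero :: "nat set \<Rightarrow> 'u \<Rightarrow> 'e"
  ks    :: "nat set \<Rightarrow> 'u \<Rightarrow> 'e"
  kpsi  :: "nat set \<Rightarrow> 'u \<Rightarrow> 'x"
  kUIJ  :: "nat set \<Rightarrow> nat set \<Rightarrow> 'u set"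
  kPhi  :: "nat set \<Rightarrow> nat set \<Rightarrow> 'e \<Rightarrow> 'e"
  kphi  :: "nat set \<Rightarrow> nat set \<Rightarrow> 'u \<Rightarrow> 'u"
  kEE   :: "nat set \<Rightarrow> nat set \<Rightarrow> 'e set"

definition kfp :: "('x,'u,'e,'z) katlas_scheme \<Rightarrow> nat set \<Rightarrow> 'x set" where
  "kfp K I = (\<Inter>i\<in>I. kF K i)"

definition kIdx :: "('x,'u,'e,'z) katlas_scheme \<Rightarrow> nat set set" where
  "kIdx K = {I. I \<noteq> {} \<and> I \<subseteq> {1..kN K} \<and> kfp K I \<noteq> {}}"

definition kZ :: "('x,'u,'e,'z) katlas_scheme \<Rightarrow> nat set \<Rightarrow> 'u set" where
  "kZ K I = {x \<in> topspace (kU K I). ks K I x = kzero K I x}"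

definition kUU :: "('x,'u,'e,'z) katlas_scheme \<Rightarrow> nat set \<Rightarrow> nat set \<Rightarrow> 'u set" where
  "kUU K I J = (if I = J then topspace (kU K I) else kUIJ K I J)"

definition kph :: "('x,'u,'e,'z) katlas_scheme \<Rightarrow> nat set \<Rightarrow> nat set \<Rightarrow> 'u \<Rightarrow> 'u" where
  "kph K I J = (if I = J then id else kphi K I J)"

definition kUIJK :: "('x,'u,'e,'z) katlas_scheme \<Rightarrow> nat set \<Rightarrow> nat set \<Rightarrow> nat set \<Rightarrow> 'u set" where
  "kUIJK K I J L = {x \<in> kUIJ K I J. kphi K I J x \<in> kUIJ K J L}"

definition is_chart :: "'x topology \<Rightarrow> ('x,'u,'e,'z) katlas_scheme \<Rightarrow> nat set \<Rightarrow> 'x set \<Rightarrow> bool" where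
  "is_chart X K I F \<longleftrightarrow>
     metrizable_space (kU K I) \<and> separable_space (kU K I) \<and> locally_compact_space (kU K I) \<and>
     metrizable_space (kE K I) \<and> separable_space (kE K I) \<and> locally_compact_space (kE K I) \<and>
     continuous_map (kE K I) (kU K I) (kpr K I) \<and>
     continuous_map (kU K I) (kE K I) (kzero K I) \<and>
     (\<forall>x\<in>topspace (kU K I). kpr K I (kzero K I x) = x) \<and>
     continuous_map (kU K I) (kE K I) (ks K I) \<and>
     (\<forall>x\<in>topspace (kU K I). kpr K I (ks K I x) = x) \<and>
     openin X F \<and>
     homeomorphic_map (subtopology (kU K I) (kZ K I)) (subtopology X F) (kpsi K I)"

definition is_coord_change :: "('x,'u,'e,'z) katlas_scheme \<Rightarrow> nat set \<Rightarrow> nat set \<Rightarrow> bool" where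
  "is_coord_change K I J \<longleftrightarrow>
     openin (kU K I) (kUIJ K I J) \<and>
     kUIJ K I J \<inter> kZ K I = {x \<in> kZ K I. kpsi K I x \<in> kfp K I \<inter> kfp K J} \<and>
     embedding_map (subtopology (kE K I) {e \<in> topspace (kE K I). kpr K I e \<in> kUIJ K I J})
                   (kE K J) (kPhi K I J) \<and>
     embedding_map (subtopology (kU K I) (kUIJ K I J)) (kU K J) (kphi K I J) \<and>
     (\<forall>e\<in>topspace (kE K I). kpr K I e \<in> kUIJ K I J \<longrightarrow>
        kpr K J (kPhi K I J e) = kphi K I J (kpr K I e)) \<and>
     (\<forall>x\<in>kUIJ K I J. kzero K J (kphi K I J x) = kPhi K I J (kzero K I x) \<and>
                      ks K J (kphi K I J x) = kPhi K I J (ks K I x)) \<and>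
     (\<forall>x\<in>kUIJ K I J \<inter> kZ K I. kphi K I J x \<in> kZ K J \<and> kpsi K J (kphi K I J x) = kpsi K I x)"

definition weak_atlas :: "'x topology \<Rightarrow> ('x,'u,'e,'z) katlas_scheme \<Rightarrow> bool" where
  "weak_atlas X K \<longleftrightarrow>
     (\<forall>i\<in>{1..kN K}. is_chart X K {i} (kF K i)) \<and>
     (\<Union>i\<in>{1..kN K}. kF K i) = topspace X \<and>
     (\<forall>I\<in>kIdx K. is_chart X K I (kfp K I)) \<and>
     (\<forall>I\<in>kIdx K. \<forall>J\<in>kIdx K. I \<subset> J \<longrightarrow> is_coord_change K I J) \<and>
     (\<forall>I\<in>kIdx K. \<forall>J\<in>kIdx K. \<forall>L\<in>kIdx K. I \<subset> J \<and> J \<subset> L \<longrightarrow>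
        (\<forall>e\<in>topspace (kE K I). kpr K I e \<in> kUIJK K I J L \<inter> kUIJ K I L \<longrightarrow>
           kPhi K J L (kPhi K I J e) = kPhi K I L e))"

definition top_atlas :: "'x topology \<Rightarrow> ('x,'u,'e,'z) katlas_scheme \<Rightarrow> bool" where
  "top_atlas X K \<longleftrightarrow> weak_atlas X K \<and>
     (\<forall>I\<in>kIdx K. \<forall>J\<in>kIdx K. \<forall>L\<in>kIdx K. I \<subset> J \<and> J \<subset> L \<longrightarrow> kUIJK K I J L \<subseteq> kUIJ K I L)"

text \<open>Filtration E_IJ = kEE K I J (for J in the index set and I \<subseteq> J, including I = {}).\<close>
definition filtered :: "('x,'u,'e,'z) katlas_scheme \<Rightarrow> bool" where
  "filtered K \<longleftrightarrow>
     (\<forall>J\<in>kIdx K. \<forall>I. I \<subseteq> J \<longrightarrow> closedin (kE K J) (kEE K I J)) \<and>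
     (\<forall>J\<in>kIdx K. kEE K J J = topspace (kE K J) \<and> kEE K {} J = kzero K J ` topspace (kU K J)) \<and>
     (\<forall>J\<in>kIdx K. \<forall>L\<in>kIdx K. \<forall>I. I \<subseteq> J \<and> J \<subset> L \<longrightarrow>
        kPhi K J L ` {e \<in> kEE K I J. kpr K J e \<in> kUIJ K J L}
          = {e \<in> kEE K I L. kpr K L e \<in> kphi K J L ` kUIJ K J L}) \<and>
     (\<forall>J\<in>kIdx K. \<forall>I H. I \<subseteq> J \<and> H \<subseteq> J \<longrightarrow> kEE K I J \<inter> kEE K H J = kEE K (I \<inter> H) J) \<and>
     (\<forall>I\<in>kIdx K. \<forall>J\<in>kIdx K. I \<subset> J \<longrightarrow>
        openin (subtopology (kU K J) {x \<in> topspace (kU K J). ks K J x \<in> kEE K I J})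
               (kphi K I J ` kUIJ K I J))"

definition tame :: "('x,'u,'e,'z) katlas_scheme \<Rightarrow> bool" where
  "tame K \<longleftrightarrow>
     (\<forall>I\<in>kIdx K. \<forall>J\<in>kIdx K. \<forall>L\<in>kIdx K. I \<subseteq> J \<and> I \<subseteq> L \<longrightarrow>
        kUU K I J \<inter> kUU K I L = (if J \<union> L \<in> kIdx K then kUU K I (J \<union> L) else {})) \<and>
     (\<forall>I\<in>kIdx K. \<forall>J\<in>kIdx K. \<forall>L\<in>kIdx K. I \<subseteq> J \<and> J \<subseteq> L \<longrightarrow>
        kph K I J ` kUU K I L = {x \<in> kUU K J L. ks K J x \<in> kEE K I J})"

definition tame_atlas :: "'x topology \<Rightarrow> ('x,'u,'e,'z) katlas_scheme \<Rightarrow> bool" where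
  "tame_atlas X K \<longleftrightarrow> top_atlas X K \<and> filtered K \<and> tame K"

definition restrict_atlas :: "('x,'u,'e) katlas \<Rightarrow> (nat set \<Rightarrow> 'u set) \<Rightarrow> (nat \<Rightarrow> 'x set) \<Rightarrow> ('x,'u,'e) katlas" where
  "restrict_atlas K U' F' = K\<lparr>
     kF := F',
     kU := (\<lambda>I. subtopology (kU K I) (U' I)),
     kE := (\<lambda>I. subtopology (kE K I) {e \<in> topspace (kE K I). kpr K I e \<in> U' I}),
     kUIJ := (\<lambda>I J. {x \<in> kUIJ K I J. x \<in> U' I \<and> kphi K I J x \<in> U' J}),
     kEE := (\<lambda>I J. {e \<in> kEE K I J. kpr K J e \<in> U' J})\<rparr>"

definition fp_shrinking :: "'x topology \<Rightarrow> nat \<Rightarrow> (nat \<Rightarrow> 'x set) \<Rightarrow> (nat \<Rightarrow> 'x set) \<Rightarrow> bool" where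
  "fp_shrinking X N F F' \<longleftrightarrow>
     (\<forall>i\<in>{1..N}. openin X (F' i) \<and> F' i \<subseteq> F i \<and>
        compactin (subtopology X (F i)) ((subtopology X (F i)) closure_of (F' i))) \<and>
     (\<Union>i\<in>{1..N}. F' i) = topspace X \<and>
     (\<forall>I. I \<noteq> {} \<and> I \<subseteq> {1..N} \<and> (\<Inter>i\<in>I. F i) \<noteq> {} \<longrightarrow> (\<Inter>i\<in>I. F' i) \<noteq> {})"

definition shrinking :: "'x topology \<Rightarrow> ('x,'u,'e) katlas \<Rightarrow> (nat set \<Rightarrow> 'u set) \<Rightarrow> (nat \<Rightarrow> 'x set) \<Rightarrow> bool" where
  "shrinking X K U' F' \<longleftrightarrow>
     fp_shrinking X (kN K) (kF K) F' \<and>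
     (\<forall>I\<in>kIdx K. openin (kU K I) (U' I) \<and> U' I \<subseteq> topspace (kU K I) \<and>
        compactin (kU K I) ((kU K I) closure_of (U' I))) \<and>
     weak_atlas X (restrict_atlas K U' F')"

definition tame_shrinking :: "'x topology \<Rightarrow> ('x,'u,'e) katlas \<Rightarrow> (nat set \<Rightarrow> 'u set) \<Rightarrow> (nat \<Rightarrow> 'x set) \<Rightarrow> bool" where
  "tame_shrinking X K U' F' \<longleftrightarrow> shrinking X K U' F' \<and> tame_atlas X (restrict_atlas K U' F')"

text \<open>Virtual neighbourhood |K| as a set: quotient of the disjoint union of the U_I
by the equivalence relation generated by (I,x) ~ (J, phi_IJ x).\<close>
definition kcarrier :: "('x,'u,'e,'z) katlas_scheme \<Rightarrow> (nat set \<times> 'u) set" where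
  "kcarrier K = Sigma (kIdx K) (\<lambda>I. topspace (kU K I))"

definition kgen :: "('x,'u,'e,'z) katlas_scheme \<Rightarrow> ((nat set \<times> 'u) \<times> (nat set \<times> 'u)) set" where
  "kgen K = {((I, x), (J, kph K I J x)) | I J x.
              I \<in> kIdx K \<and> J \<in> kIdx K \<and> I \<subseteq> J \<and> x \<in> kUU K I J}"

definition krel :: "('x,'u,'e,'z) katlas_scheme \<Rightarrow> ((nat set \<times> 'u) \<times> (nat set \<times> 'u)) set" where
  "krel K = (kgen K \<union> (kgen K)\<inverse>)\<^sup>* \<inter> (kcarrier K \<times> kcarrier K)"

definition kvirt :: "('x,'u,'e,'z) katlas_scheme \<Rightarrow> (nat set \<times> 'u) set set" where
  "kvirt K = kcarrier K // krel K"

definition kpi :: "('x,'u,'e,'z) katlas_scheme \<Rightarrow> nat set \<times> 'u \<Rightarrow> (nat set \<times> 'u) set" where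
  "kpi K p = krel K `` {p}"

end

theory Submission
  imports Defs
begin

text \<open>If $(I,x)$ and $(J,y)$ with $x \in U'_I$, $y \in U'_J$ are identified in
$|\mathcal K|$, tameness shows that they already have a common image $z$ in the chart
$M = I \cup J$. If $H = I \cap J \neq \emptyset$, then $\mathfrak s_M(z) \in \mathbb E_{HM}$,
so $z = \phi_{HM}(w)$, and tameness of $\mathcal K'$ places $w$ in $U'_H$ with
$\phi_{HI}(w) = x$, $\phi_{HJ}(w) = y$. If $I \cap J = \emptyset$, then $z$ lies in the zero
set, $x$ and $y$ represent the same point of $F'_I \cap F'_J = F'_M$, and the coordinate
changes of $\mathcal K'$ send both to $z \in U'_M$. Either way the relation of
$\mathcal K'$ is the restriction of that of $\mathcal K$, and the classes of a restricted
equivalence relation inject into the classes of the original one.\<close>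

lemma embedding_map_in_topspace:
  "embedding_map X Y f \<Longrightarrow> x \<in> topspace X \<Longrightarrow> f x \<in> topspace Y"
  unfolding embedding_map_def
  by (metis homeomorphic_imp_surjective_map IntE image_eqI topspace_subtopology)

lemma embedding_map_inj_on: "embedding_map X Y f \<Longrightarrow> inj_on f (topspace X)"
  unfolding embedding_map_def by (rule homeomorphic_imp_injective_map)

lemma equiv_restrict:
  assumes "equiv A r" "B \<subseteq> A"
  shows "equiv B (r \<inter> B \<times> B)"
proof (rule equivI)
  show "refl_on B (r \<inter> B \<times> B)"
    using assms by (auto simp: equiv_def refl_on_def)
  show "sym (r \<inter> B \<times> B)"
    using assms by (auto simp: equiv_def sym_def)
  show "trans (r \<inter> B \<times> B)"
    using assms unfolding equiv_def trans_def by blast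
qed simp

lemma quotient_restrict_inj:
  assumes r: "equiv A r" and "B \<subseteq> A"
  defines "s \<equiv> r \<inter> B \<times> B"
  shows "\<exists>f. (\<forall>x\<in>B. f (s``{x}) = r``{x}) \<and> inj_on f (B // s)"
proof (intro exI conjI ballI)
  have s: "equiv B s"
    unfolding s_def by (rule equiv_restrict[OF assms(1,2)])
  show image_class: "r``(s``{x}) = r``{x}" if "x \<in> B" for x
  proof
    show "r``(s``{x}) \<subseteq> r``{x}"
      using r unfolding s_def by (auto elim: equivE dest: transD)
    show "r``{x} \<subseteq> r``(s``{x})"
      using equiv_class_self[OF s that] by blast
  qed
  show "inj_on (Image r) (B // s)"
  proof (rule inj_onI)
    fix X Y assume X: "X \<in> B // s" and Y: "Y \<in> B // s" and eq: "r``X = r``Y"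
    obtain x where x: "x \<in> B" "X = s``{x}"
      using X by (rule quotientE) blast
    obtain y where y: "y \<in> B" "Y = s``{y}"
      using Y by (rule quotientE) blast
    have "r``{x} = r``{y}"
      using eq image_class x y by simp
    then have "(x, y) \<in> s"
      using eq_equiv_class_iff[OF r] assms(2) x(1) y(1) by (auto simp: s_def)
    then show "X = Y"
      using s x y by (simp add: equiv_class_eq)
  qed
qed

lemma weak_atlas_chart: "weak_atlas X K \<Longrightarrow> I \<in> kIdx K \<Longrightarrow> is_chart X K I (kfp K I)"
  by (simp add: weak_atlas_def)

lemma weak_atlas_coord_change:
  "weak_atlas X K \<Longrightarrow> I \<in> kIdx K \<Longrightarrow> J \<in> kIdx K \<Longrightarrow> I \<subset> J \<Longrightarrow> is_coord_change K I J"
  by (simp add: weak_atlas_def)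

lemma is_chart_pr_zero:
  "is_chart X K I F \<Longrightarrow> x \<in> topspace (kU K I) \<Longrightarrow> kpr K I (kzero K I x) = x"
  by (simp add: is_chart_def)

lemma is_chart_pr_section:
  "is_chart X K I F \<Longrightarrow> x \<in> topspace (kU K I) \<Longrightarrow> kpr K I (ks K I x) = x"
  by (simp add: is_chart_def)

lemma is_chart_zero_in_topspace:
  "is_chart X K I F \<Longrightarrow> x \<in> topspace (kU K I) \<Longrightarrow> kzero K I x \<in> topspace (kE K I)"
  unfolding is_chart_def by (meson continuous_map_funspace funcset_mem)

lemma is_chart_section_in_topspace:
  "is_chart X K I F \<Longrightarrow> x \<in> topspace (kU K I) \<Longrightarrow> ks K I x \<in> topspace (kE K I)"
  unfolding is_chart_def by (meson continuous_map_funspace funcset_mem)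

lemma is_chart_zero_inj: "is_chart X K I F \<Longrightarrow> inj_on (kzero K I) (topspace (kU K I))"
  by (metis inj_onI is_chart_pr_zero)

lemma is_chart_psi_in_footprint: "is_chart X K I F \<Longrightarrow> x \<in> kZ K I \<Longrightarrow> kpsi K I x \<in> F"
  unfolding is_chart_def
  by (metis (no_types, lifting) homeomorphic_imp_surjective_map image_eqI kZ_def mem_Collect_eq
      topspace_subtopology IntE Int_iff)

lemma is_coord_change_domain: "is_coord_change K I J \<Longrightarrow> kUIJ K I J \<subseteq> topspace (kU K I)"
  by (auto simp: is_coord_change_def dest: openin_subset)

lemma is_coord_change_phi_in_topspace:
  assumes "is_coord_change K I J" "x \<in> kUIJ K I J"
  shows "kphi K I J x \<in> topspace (kU K J)"
proof -
  have "x \<in> topspace (subtopology (kU K I) (kUIJ K I J))"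
    using assms is_coord_change_domain by fastforce
  then show ?thesis
    using assms(1) by (auto simp: is_coord_change_def intro: embedding_map_in_topspace)
qed

lemma is_coord_change_Phi_inj_on:
  "is_coord_change K I J \<Longrightarrow>
     inj_on (kPhi K I J) {e \<in> topspace (kE K I). kpr K I e \<in> kUIJ K I J}"
  unfolding is_coord_change_def
  by (metis (no_types, lifting) embedding_map_inj_on inf.absorb_iff2 mem_Collect_eq subsetI
      topspace_subtopology)

lemma inj_on_kph:
  assumes "weak_atlas X K" "I \<in> kIdx K" "J \<in> kIdx K" "I \<subseteq> J"
  shows "inj_on (kph K I J) (kUU K I J)"
proof (cases "I = J")
  case False
  with assms have cc: "is_coord_change K I J"
    by (intro weak_atlas_coord_change) auto
  then have "topspace (subtopology (kU K I) (kUIJ K I J)) = kUIJ K I J"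
    using is_coord_change_domain by fastforce
  with False cc show ?thesis
    using embedding_map_inj_on[of "subtopology (kU K I) (kUIJ K I J)" "kU K J" "kphi K I J"]
    by (auto simp: kph_def kUU_def is_coord_change_def)
qed (simp add: kph_def)

lemma weak_atlas_cocycle:
  assumes "weak_atlas X K" "I \<in> kIdx K" "J \<in> kIdx K" "L \<in> kIdx K" "I \<subset> J" "J \<subset> L"
    and "e \<in> topspace (kE K I)" "kpr K I e \<in> kUIJK K I J L \<inter> kUIJ K I L"
  shows "kPhi K J L (kPhi K I J e) = kPhi K I L e"
  using assms unfolding weak_atlas_def by blast

text \<open>The weak cocycle condition only relates the bundle maps $\widehat\Phi$; it
transfers to the base maps $\phi$ because these intertwine the zero sections, which
are injective.\<close>

lemma kph_cocycle:
  assumes atlas: "top_atlas X K" and idx: "I \<in> kIdx K" "J \<in> kIdx K" "L \<in> kIdx K"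
    and "I \<subseteq> J" "J \<subseteq> L" and x: "x \<in> kUU K I J" "kph K I J x \<in> kUU K J L"
  shows "x \<in> kUU K I L \<and> kph K I L x = kph K J L (kph K I J x)"
proof (cases "I = J \<or> J = L")
  case True
  then show ?thesis
  proof
    assume "I = J"
    then show ?thesis using x by (simp add: kph_def kUU_def)
  next
    assume "J = L"
    then show ?thesis using x by (simp add: kph_def kUU_def)
  qed
next
  case False
  then have IJ: "I \<subset> J" and JL: "J \<subset> L" and IL: "I \<subset> L"
    using assms by auto
  then have neq: "I \<noteq> J" "J \<noteq> L" "I \<noteq> L"
    by auto
  have weak: "weak_atlas X K"
    using atlas by (simp add: top_atlas_def)
  have ccIJ: "is_coord_change K I J" and ccJL: "is_coord_change K J L"
    and ccIL: "is_coord_change K I L"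
    using weak idx IJ JL IL by (auto intro: weak_atlas_coord_change)
  have xIJ: "x \<in> kUIJ K I J" and xJL: "kphi K I J x \<in> kUIJ K J L"
    using x neq by (simp_all add: kUU_def kph_def)
  then have xIJL: "x \<in> kUIJK K I J L"
    by (simp add: kUIJK_def)
  moreover have "kUIJK K I J L \<subseteq> kUIJ K I L"
    using atlas idx IJ JL by (simp add: top_atlas_def)
  ultimately have xIL: "x \<in> kUIJ K I L"
    by blast
  have chI: "is_chart X K I (kfp K I)" and chL: "is_chart X K L (kfp K L)"
    using weak idx by (auto intro: weak_atlas_chart)
  have xI: "x \<in> topspace (kU K I)"
    using xIJ ccIJ is_coord_change_domain by blast
  have "kPhi K J L (kPhi K I J (kzero K I x)) = kPhi K I L (kzero K I x)"
    using weak_atlas_cocycle[OF weak idx IJ JL is_chart_zero_in_topspace[OF chI xI]]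
      xIJL xIL is_chart_pr_zero[OF chI xI] by simp
  then have "kzero K L (kphi K J L (kphi K I J x)) = kzero K L (kphi K I L x)"
    using ccIJ ccJL ccIL xIJ xJL xIL by (simp add: is_coord_change_def)
  moreover have "kphi K J L (kphi K I J x) \<in> topspace (kU K L)" "kphi K I L x \<in> topspace (kU K L)"
    using ccJL xJL ccIL xIL by (auto intro: is_coord_change_phi_in_topspace)
  ultimately have "kphi K J L (kphi K I J x) = kphi K I L x"
    using is_chart_zero_inj[OF chL] by (auto dest: inj_onD)
  then show ?thesis
    using xIL neq by (simp add: kUU_def kph_def)
qed

lemma tame_atlasD:
  assumes "tame_atlas X K"
  shows "top_atlas X K" "weak_atlas X K" "filtered K" "tame K"
  using assms by (simp_all add: tame_atlas_def top_atlas_def)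

lemma tame_kUU_Int:
  "tame K \<Longrightarrow> I \<in> kIdx K \<Longrightarrow> J \<in> kIdx K \<Longrightarrow> L \<in> kIdx K \<Longrightarrow> I \<subseteq> J \<Longrightarrow> I \<subseteq> L \<Longrightarrow>
    kUU K I J \<inter> kUU K I L = (if J \<union> L \<in> kIdx K then kUU K I (J \<union> L) else {})"
  by (simp add: tame_def)

lemma tame_kph_image:
  "tame K \<Longrightarrow> I \<in> kIdx K \<Longrightarrow> J \<in> kIdx K \<Longrightarrow> L \<in> kIdx K \<Longrightarrow> I \<subseteq> J \<Longrightarrow> J \<subseteq> L \<Longrightarrow>
    kph K I J ` kUU K I L = {x \<in> kUU K J L. ks K J x \<in> kEE K I J}"
  by (simp add: tame_def)

lemma filtered_kEE_Int:
  "filtered K \<Longrightarrow> J \<in> kIdx K \<Longrightarrow> I \<subseteq> J \<Longrightarrow> H \<subseteq> J \<Longrightarrow>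
    kEE K I J \<inter> kEE K H J = kEE K (I \<inter> H) J"
  by (simp add: filtered_def)

lemma filtered_kEE_empty:
  "filtered K \<Longrightarrow> J \<in> kIdx K \<Longrightarrow> kEE K {} J = kzero K J ` topspace (kU K J)"
  by (simp add: filtered_def)

lemma kIdx_subset:
  assumes "I \<in> kIdx K" "H \<subseteq> I" "H \<noteq> {}"
  shows "H \<in> kIdx K"
proof -
  have "kfp K I \<subseteq> kfp K H"
    using assms(2) by (auto simp: kfp_def)
  then show ?thesis
    using assms by (auto simp: kIdx_def)
qed

subsection \<open>The equivalence relation on $\bigsqcup_I U_I$\<close>

lemma equiv_krel: "equiv (kcarrier K) (krel K)"
proof (rule equivI)
  let ?S = "kgen K \<union> (kgen K)\<inverse>"
  show "krel K \<subseteq> kcarrier K \<times> kcarrier K"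
    by (simp add: krel_def)
  show "refl_on (kcarrier K) (krel K)"
    by (simp add: krel_def refl_on_def)
  have "?S\<inverse> = ?S"
    by (simp add: converse_Un sup_commute)
  then have "(?S\<^sup>*)\<inverse> = ?S\<^sup>*"
    by (simp add: rtrancl_converse[symmetric])
  then show "sym (krel K)"
    unfolding krel_def by (intro symI) blast
  show "trans (krel K)"
    unfolding krel_def by (intro transI) (auto intro: rtrancl_trans)
qed

lemma krel_kgen_source:
  "(c, p) \<in> kgen K \<Longrightarrow> (c, q) \<in> kgen K \<Longrightarrow> p \<in> kcarrier K \<Longrightarrow> q \<in> kcarrier K \<Longrightarrow>
    (p, q) \<in> krel K"
  unfolding krel_def by (blast intro: rtrancl_trans r_into_rtrancl)

lemma krel_kgen_target:
  "(p, c) \<in> kgen K \<Longrightarrow> (q, c) \<in> kgen K \<Longrightarrow> p \<in> kcarrier K \<Longrightarrow> q \<in> kcarrier K \<Longrightarrow>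
    (p, q) \<in> krel K"
  unfolding krel_def by (blast intro: rtrancl_trans r_into_rtrancl)

definition common_image ::
    "('x,'u,'e,'z) katlas_scheme \<Rightarrow> nat set \<Rightarrow> nat set \<Rightarrow> 'u \<Rightarrow> nat set \<Rightarrow> 'u \<Rightarrow> bool" where
  "common_image K L I x J y \<longleftrightarrow> I \<union> J \<subseteq> L \<and> x \<in> kUU K I L \<and> y \<in> kUU K J L \<and>
     kph K I L x = kph K J L y"

text \<open>By tameness, having a common image in some chart survives the generating moves of the
equivalence relation, so all equivalent pairs have one.\<close>

lemma common_image_up:
  assumes atlas: "tame_atlas X K" and idx: "I \<in> kIdx K" "J \<in> kIdx K" "L \<in> kIdx K" "J' \<in> kIdx K"
    and common: "common_image K L I x J y" and JJ': "J \<subseteq> J'" and yJ': "y \<in> kUU K J J'"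
  shows "L \<union> J' \<in> kIdx K \<and> common_image K (L \<union> J') I x J' (kph K J J' y)"
proof -
  note tame = tame_atlasD(4)[OF atlas] and cocycle = kph_cocycle[OF tame_atlasD(1)[OF atlas]]
  have sub: "I \<union> J \<subseteq> L" and xL: "x \<in> kUU K I L" and yL: "y \<in> kUU K J L"
    and eq: "kph K I L x = kph K J L y"
    using common by (simp_all add: common_image_def)
  have "kUU K J L \<inter> kUU K J J' = (if L \<union> J' \<in> kIdx K then kUU K J (L \<union> J') else {})"
    using tame_kUU_Int[OF tame idx(2,3,4)] sub JJ' by auto
  then have L2: "L \<union> J' \<in> kIdx K" and yL2: "y \<in> kUU K J (L \<union> J')"
    using yL yJ' by (auto split: if_splits)
  have "kph K J L y \<in> kUU K L (L \<union> J')"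
    using tame_kph_image[OF tame idx(2,3) L2] yL2 sub by auto
  then have "kph K I L x \<in> kUU K L (L \<union> J')"
    using eq by simp
  then have x2: "x \<in> kUU K I (L \<union> J') \<and> kph K I (L \<union> J') x = kph K L (L \<union> J') (kph K I L x)"
    using cocycle[OF idx(1,3) L2] sub xL by auto
  have y2: "kph K J (L \<union> J') y = kph K L (L \<union> J') (kph K J L y)"
    using cocycle[OF idx(2,3) L2] sub yL \<open>kph K J L y \<in> kUU K L (L \<union> J')\<close> by auto
  have y'2: "kph K J J' y \<in> kUU K J' (L \<union> J')"
    using tame_kph_image[OF tame idx(2,4) L2] yL2 JJ' by auto
  then have "kph K J' (L \<union> J') (kph K J J' y) = kph K J (L \<union> J') y"
    using cocycle[OF idx(2,4) L2] JJ' yJ' by auto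
  then show ?thesis
    using L2 x2 y2 y'2 eq sub by (auto simp: common_image_def)
qed

lemma common_image_down:
  assumes "top_atlas X K" "I \<in> kIdx K" "J \<in> kIdx K" "L \<in> kIdx K" "J' \<in> kIdx K"
    and "common_image K L I x J (kph K J' J w)" "J' \<subseteq> J" "w \<in> kUU K J' J"
  shows "common_image K L I x J' w"
  using assms kph_cocycle[OF assms(1) assms(5,3,4)] by (auto simp: common_image_def)

lemma krel_common_image:
  assumes atlas: "tame_atlas X K" and rel: "((I, x), (J, y)) \<in> krel K"
  shows "I \<in> kIdx K \<and> J \<in> kIdx K \<and> (\<exists>L\<in>kIdx K. common_image K L I x J y)"
proof -
  have I: "I \<in> kIdx K" and xI: "x \<in> topspace (kU K I)"
    using rel by (auto simp: krel_def kcarrier_def)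
  have "((I, x), (J, y)) \<in> (kgen K \<union> (kgen K)\<inverse>)\<^sup>*"
    using rel by (simp add: krel_def)
  then show ?thesis
  proof (induction rule: rtrancl_induct2)
    case refl
    then show ?case
      using I xI by (auto simp: common_image_def kUU_def kph_def)
  next
    case (step J y J' y')
    from step.IH obtain L where J: "J \<in> kIdx K" and L: "L \<in> kIdx K"
      and common: "common_image K L I x J y"
      by blast
    from step.hyps(2) show ?case
    proof
      assume "((J, y), (J', y')) \<in> kgen K"
      then have J': "J' \<in> kIdx K" "J \<subseteq> J'" "y \<in> kUU K J J'" "y' = kph K J J' y"
        by (auto simp: kgen_def)
      then show ?thesis
        using common_image_up[OF atlas I J L J'(1) common J'(2,3)] I by auto
    next
      assume "((J, y), (J', y')) \<in> (kgen K)\<inverse>"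
      then have J': "J' \<in> kIdx K" "J' \<subseteq> J" "y' \<in> kUU K J' J" "y = kph K J' J y'"
        by (auto simp: kgen_def)
      then show ?thesis
        using common_image_down[OF tame_atlasD(1)[OF atlas] I J L J'(1)] common L I by auto
    qed
  qed
qed

lemma common_image_union:
  assumes atlas: "tame_atlas X K" and idx: "I \<in> kIdx K" "J \<in> kIdx K" "L \<in> kIdx K"
    and common: "common_image K L I x J y"
  shows "I \<union> J \<in> kIdx K \<and> common_image K (I \<union> J) I x J y"
proof -
  note tame = tame_atlasD(4)[OF atlas] and cocycle = kph_cocycle[OF tame_atlasD(1)[OF atlas]]
  have sub: "I \<union> J \<subseteq> L" and xL: "x \<in> kUU K I L" and yL: "y \<in> kUU K J L"
    and eq: "kph K I L x = kph K J L y"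
    using common by (simp_all add: common_image_def)
  define M where "M = I \<union> J"
  have M: "M \<in> kIdx K"
    using kIdx_subset[OF idx(3) sub] idx(1) by (auto simp: M_def kIdx_def)
  have IM: "I \<subseteq> M" and JM: "J \<subseteq> M" and M_sub_L: "M \<subseteq> L" and M_Un_L: "M \<union> L = L"
    using sub by (auto simp: M_def)
  have xM: "x \<in> kUU K I M"
    using tame_kUU_Int[OF tame idx(1) M idx(3)] xL IM sub idx(3) M_Un_L by auto
  have yM: "y \<in> kUU K J M"
    using tame_kUU_Int[OF tame idx(2) M idx(3)] yL JM sub idx(3) M_Un_L by auto
  have xML: "kph K I M x \<in> kUU K M L"
    using tame_kph_image[OF tame idx(1) M idx(3) IM M_sub_L] xL by auto
  have yML: "kph K J M y \<in> kUU K M L"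
    using tame_kph_image[OF tame idx(2) M idx(3) JM M_sub_L] yL by auto
  have "kph K M L (kph K I M x) = kph K M L (kph K J M y)"
    using cocycle[OF idx(1) M idx(3) IM M_sub_L xM xML]
      cocycle[OF idx(2) M idx(3) JM M_sub_L yM yML] eq by simp
  then have "kph K I M x = kph K J M y"
    using inj_on_kph[OF tame_atlasD(2)[OF atlas] M idx(3) M_sub_L] xML yML by (auto dest: inj_onD)
  then show ?thesis
    using M xM yM by (simp add: M_def common_image_def)
qed

subsection \<open>Restricted atlases\<close>

lemma restrict_atlas_simps [simp]:
  "kN (restrict_atlas K U' F') = kN K"
  "kF (restrict_atlas K U' F') = F'"
  "kU (restrict_atlas K U' F') I = subtopology (kU K I) (U' I)"
  "kpr (restrict_atlas K U' F') = kpr K"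
  "kzero (restrict_atlas K U' F') = kzero K"
  "ks (restrict_atlas K U' F') = ks K"
  "kpsi (restrict_atlas K U' F') = kpsi K"
  "kphi (restrict_atlas K U' F') = kphi K"
  "kPhi (restrict_atlas K U' F') = kPhi K"
  "kUIJ (restrict_atlas K U' F') I J = {x \<in> kUIJ K I J. x \<in> U' I \<and> kphi K I J x \<in> U' J}"
  "kEE (restrict_atlas K U' F') I J = {e \<in> kEE K I J. kpr K J e \<in> U' J}"
  by (simp_all add: restrict_atlas_def)

lemma kph_restrict_atlas [simp]: "kph (restrict_atlas K U' F') = kph K"
  by (intro ext) (simp add: kph_def)

lemma kUU_restrict_atlas:
  "kUU (restrict_atlas K U' F') I J = {x \<in> kUU K I J. x \<in> U' I \<and> kph K I J x \<in> U' J}"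
  by (auto simp: kUU_def kph_def)

lemma kZ_restrict_atlas: "kZ (restrict_atlas K U' F') I = kZ K I \<inter> U' I"
  by (auto simp: kZ_def)

lemma kIdx_restrict_atlas:
  assumes "fp_shrinking X (kN K) (kF K) F'"
  shows "kIdx (restrict_atlas K U' F') = kIdx K"
proof -
  have "(\<Inter>i\<in>I. F' i) \<noteq> {} \<longleftrightarrow> (\<Inter>i\<in>I. kF K i) \<noteq> {}" if "I \<noteq> {}" "I \<subseteq> {1..kN K}" for I
  proof
    have "(\<Inter>i\<in>I. F' i) \<subseteq> (\<Inter>i\<in>I. kF K i)"
      using assms that unfolding fp_shrinking_def by blast
    then show "(\<Inter>i\<in>I. F' i) \<noteq> {} \<Longrightarrow> (\<Inter>i\<in>I. kF K i) \<noteq> {}"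
      by blast
    show "(\<Inter>i\<in>I. kF K i) \<noteq> {} \<Longrightarrow> (\<Inter>i\<in>I. F' i) \<noteq> {}"
      using assms that unfolding fp_shrinking_def by blast
  qed
  then show ?thesis
    unfolding kIdx_def kfp_def by auto
qed

lemma kIdx_shrinking: "shrinking X K U' F' \<Longrightarrow> kIdx (restrict_atlas K U' F') = kIdx K"
  unfolding shrinking_def using kIdx_restrict_atlas[of X K F' U'] by blast

lemma kcarrier_restrict_atlas_subset:
  "shrinking X K U' F' \<Longrightarrow> kcarrier (restrict_atlas K U' F') \<subseteq> kcarrier K"
  using kIdx_shrinking[of X K U' F'] by (auto simp: kcarrier_def)

lemma krel_restrict_atlas_subset:
  assumes "shrinking X K U' F'"
  shows "krel (restrict_atlas K U' F') \<subseteq> krel K"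
proof -
  have "kgen (restrict_atlas K U' F') \<subseteq> kgen K"
    using kIdx_shrinking[OF assms] by (fastforce simp: kgen_def kUU_restrict_atlas)
  then have "(kgen (restrict_atlas K U' F') \<union> (kgen (restrict_atlas K U' F'))\<inverse>)\<^sup>*
      \<subseteq> (kgen K \<union> (kgen K)\<inverse>)\<^sup>*"
    by (intro rtrancl_mono) blast
  then show ?thesis
    using kcarrier_restrict_atlas_subset[OF assms] unfolding krel_def by blast
qed

lemma tame_shrinkingD:
  assumes "tame_shrinking X K U' F'"
  shows "shrinking X K U' F'" "tame_atlas X (restrict_atlas K U' F')"
    "kIdx (restrict_atlas K U' F') = kIdx K"
  using assms kIdx_shrinking[of X K U' F'] by (simp_all add: tame_shrinking_def)

lemma common_image_section_in_kEE:
  assumes atlas: "tame_atlas X K" and idx: "I \<in> kIdx K" "J \<in> kIdx K" "M \<in> kIdx K"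
    and common: "common_image K M I x J y"
  shows "kph K I M x \<in> kUU K M M \<and> ks K M (kph K I M x) \<in> kEE K (I \<inter> J) M"
proof -
  note tame = tame_atlasD(4)[OF atlas]
  have IM: "I \<subseteq> M" and JM: "J \<subseteq> M" and xM: "x \<in> kUU K I M" and yM: "y \<in> kUU K J M"
    and eq: "kph K I M x = kph K J M y"
    using common by (auto simp: common_image_def)
  have "kph K I M x \<in> kUU K M M \<and> ks K M (kph K I M x) \<in> kEE K I M"
    using tame_kph_image[OF tame idx(1,3,3) IM order_refl] xM by blast
  moreover have "ks K M (kph K I M x) \<in> kEE K J M"
    using tame_kph_image[OF tame idx(2,3,3) JM order_refl] yM eq by auto
  ultimately show ?thesis
    using filtered_kEE_Int[OF tame_atlasD(3)[OF atlas] idx(3) IM JM] by blast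
qed

text \<open>Zero sets are reflected because $\widehat\Phi_{AM}$ is injective and intertwines the
sections and the zero sections.\<close>

lemma kZ_kph_reflect:
  assumes atlas: "weak_atlas X K" and idx: "A \<in> kIdx K" "M \<in> kIdx K" "A \<subset> M"
    and a: "a \<in> kUU K A M" and zero: "ks K M (kph K A M a) = kzero K M (kph K A M a)"
  shows "a \<in> kZ K A \<and> kpsi K A a = kpsi K M (kph K A M a)"
proof -
  have cc: "is_coord_change K A M"
    using weak_atlas_coord_change[OF atlas idx] .
  have chA: "is_chart X K A (kfp K A)"
    using weak_atlas_chart[OF atlas idx(1)] .
  have "A \<noteq> M"
    using idx(3) by blast
  then have aAM: "a \<in> kUIJ K A M" and z: "kph K A M a = kphi K A M a"
    using a by (simp_all add: kUU_def kph_def)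
  then have aA: "a \<in> topspace (kU K A)"
    using cc is_coord_change_domain by blast
  have "kPhi K A M (ks K A a) = kPhi K A M (kzero K A a)"
    using cc aAM zero z by (simp add: is_coord_change_def)
  then have "ks K A a = kzero K A a"
    using is_coord_change_Phi_inj_on[OF cc] aAM aA
      is_chart_section_in_topspace[OF chA aA] is_chart_zero_in_topspace[OF chA aA]
      is_chart_pr_section[OF chA aA] is_chart_pr_zero[OF chA aA]
    by (auto dest: inj_onD)
  then have "a \<in> kZ K A"
    using aA by (simp add: kZ_def)
  then show ?thesis
    using cc aAM z unfolding is_coord_change_def by auto
qed

lemma kZ_restrict_footprint:
  assumes "shrinking X K U' F'" "A \<in> kIdx K" "a \<in> kZ K A" "a \<in> U' A"
  shows "kpsi K A a \<in> kfp (restrict_atlas K U' F') A"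
proof -
  have "weak_atlas X (restrict_atlas K U' F')"
    using assms(1) by (simp add: shrinking_def)
  then have "is_chart X (restrict_atlas K U' F') A (kfp (restrict_atlas K U' F') A)"
    using weak_atlas_chart kIdx_shrinking[OF assms(1)] assms(2) by blast
  then show ?thesis
    using is_chart_psi_in_footprint[of X "restrict_atlas K U' F'" A] assms(3,4)
    by (simp add: kZ_restrict_atlas)
qed

text \<open>The second tameness identity for the shrunk atlas is what lets preimages under
$\phi$ stay inside the shrunk domains.\<close>

lemma kUU_restrict_lift:
  assumes atlas: "tame_atlas X K" and shrink: "tame_shrinking X K U' F'"
    and idx: "H \<in> kIdx K" "A \<in> kIdx K" "M \<in> kIdx K" and HA: "H \<subseteq> A" and AM: "A \<subseteq> M"
    and w: "w \<in> kUU K H M" and a: "a \<in> kUU K A M" "a \<in> topspace (kU K A)" "a \<in> U' A"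
    and eq: "kph K H M w = kph K A M a"
  shows "w \<in> kUU (restrict_atlas K U' F') H A \<and> kph K H A w = a"
proof -
  define K' where "K' = restrict_atlas K U' F'"
  note tame = tame_atlasD(4)[OF atlas]
  have tame': "tame K'" and idx': "kIdx K' = kIdx K"
    using tame_atlasD(4)[OF tame_shrinkingD(2)[OF shrink]] tame_shrinkingD(3)[OF shrink]
    by (simp_all add: K'_def)
  have "kUU K H A \<inter> kUU K H M = kUU K H M"
    using tame_kUU_Int[OF tame idx(1,2,3) HA] HA AM idx(3) by (simp add: Un_absorb1)
  then have wA: "w \<in> kUU K H A"
    using w by blast
  have wAM: "kph K H A w \<in> kUU K A M"
    using tame_kph_image[OF tame idx HA AM] w by blast
  have "kph K A M (kph K H A w) = kph K A M a"
    using kph_cocycle[OF tame_atlasD(1)[OF atlas] idx HA AM wA wAM] eq by simp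
  then have wa: "kph K H A w = a"
    using inj_on_kph[OF tame_atlasD(2)[OF atlas] idx(2,3) AM] wAM a(1) by (auto dest: inj_onD)
  have "ks K A a \<in> kEE K H A"
    using tame_kph_image[OF tame idx(1,2,2) HA order_refl] wA wa by blast
  moreover have "kpr K A (ks K A a) = a"
    using is_chart_pr_section[OF weak_atlas_chart[OF tame_atlasD(2)[OF atlas] idx(2)] a(2)] .
  ultimately have "a \<in> {x \<in> kUU K' A A. ks K' A x \<in> kEE K' H A}"
    using a(2,3) by (simp add: K'_def kUU_def)
  also have "\<dots> = kph K' H A ` kUU K' H A"
    using tame_kph_image[OF tame', of H A A] idx idx' HA by simp
  finally obtain w' where w': "w' \<in> kUU K' H A" "kph K H A w' = a"
    by (auto simp: K'_def)
  then have "w' = w"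
    using inj_on_kph[OF tame_atlasD(2)[OF atlas] idx(1,2) HA] wA wa
    by (auto simp: K'_def kUU_restrict_atlas dest: inj_onD)
  then show ?thesis
    using w' wa by (simp add: K'_def)
qed

lemma krel_restrict_overlap:
  assumes atlas: "tame_atlas X K" and shrink: "tame_shrinking X K U' F'"
    and idx: "I \<in> kIdx K" "J \<in> kIdx K" "I \<union> J \<in> kIdx K" and overlap: "I \<inter> J \<noteq> {}"
    and common: "common_image K (I \<union> J) I x J y"
    and x: "x \<in> topspace (kU K I)" "x \<in> U' I" and y: "y \<in> topspace (kU K J)" "y \<in> U' J"
  shows "((I, x), (J, y)) \<in> krel (restrict_atlas K U' F')"
proof -
  define K' where "K' = restrict_atlas K U' F'"
  define H where "H = I \<inter> J"
  have idx': "kIdx K' = kIdx K"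
    using tame_shrinkingD(3)[OF shrink] by (simp add: K'_def)
  have H: "H \<in> kIdx K"
    using kIdx_subset[OF idx(1)] overlap by (simp add: H_def)
  have HI: "H \<subseteq> I" and HJ: "H \<subseteq> J" and HM: "H \<subseteq> I \<union> J"
    by (auto simp: H_def)
  have xM: "x \<in> kUU K I (I \<union> J)" and yM: "y \<in> kUU K J (I \<union> J)"
    and eq: "kph K I (I \<union> J) x = kph K J (I \<union> J) y"
    using common by (simp_all add: common_image_def)
  have "kph K I (I \<union> J) x
      \<in> {z \<in> kUU K (I \<union> J) (I \<union> J). ks K (I \<union> J) z \<in> kEE K H (I \<union> J)}"
    using common_image_section_in_kEE[OF atlas idx common] by (simp add: H_def)
  also have "\<dots> = kph K H (I \<union> J) ` kUU K H (I \<union> J)"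
    using tame_kph_image[OF tame_atlasD(4)[OF atlas] H idx(3) idx(3) HM order_refl] by simp
  finally obtain w
    where w: "w \<in> kUU K H (I \<union> J)" "kph K H (I \<union> J) w = kph K I (I \<union> J) x"
    by auto
  have "w \<in> kUU K' H I \<and> kph K H I w = x"
    using kUU_restrict_lift[OF atlas shrink H idx(1) idx(3) HI Un_upper1 w(1)]
      xM x w(2) by (simp add: K'_def)
  moreover have "w \<in> kUU K' H J \<and> kph K H J w = y"
    using kUU_restrict_lift[OF atlas shrink H idx(2) idx(3) HJ Un_upper2 w(1)]
      yM y w(2) eq by (simp add: K'_def)
  ultimately have "((H, w), (I, x)) \<in> kgen K'" "((H, w), (J, y)) \<in> kgen K'"
    unfolding kgen_def using H idx HI HJ idx' by (auto simp: K'_def)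
  moreover have "(I, x) \<in> kcarrier K'" "(J, y) \<in> kcarrier K'"
    using idx idx' x y by (auto simp: K'_def kcarrier_def)
  ultimately show ?thesis
    unfolding K'_def by (rule krel_kgen_source)
qed

text \<open>The common image lies in $\mathfrak s_M^{-1}(\mathbb E_{\emptyset M})$, and
$\mathbb E_{\emptyset M}$ is the image of the zero section.\<close>

lemma common_image_disjoint_kZ:
  assumes atlas: "tame_atlas X K"
    and idx: "I \<in> kIdx K" "J \<in> kIdx K" "I \<union> J \<in> kIdx K" and disjoint: "I \<inter> J = {}"
    and common: "common_image K (I \<union> J) I x J y"
  shows "x \<in> kZ K I \<and> y \<in> kZ K J \<and> kpsi K I x = kpsi K J y"
proof -
  define M where "M = I \<union> J"
  define z where "z = kph K I M x"
  note weak = tame_atlasD(2)[OF atlas]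
  have M: "M \<in> kIdx K" and IM: "I \<subset> M" and JM: "J \<subset> M"
    using idx disjoint by (auto simp: M_def kIdx_def)
  have xM: "x \<in> kUU K I M" and yM: "y \<in> kUU K J M" and zy: "kph K J M y = z"
    using common by (simp_all add: common_image_def M_def z_def)
  have zM: "z \<in> kUU K M M" and "ks K M z \<in> kEE K {} M"
    using common_image_section_in_kEE[OF atlas idx common] disjoint by (simp_all add: M_def z_def)
  then obtain u where u: "u \<in> topspace (kU K M)" "ks K M z = kzero K M u"
    using filtered_kEE_empty[OF tame_atlasD(3)[OF atlas] M] by auto
  have chM: "is_chart X K M (kfp K M)"
    using weak_atlas_chart[OF weak M] .
  have "z = u"
    using is_chart_pr_section[OF chM] is_chart_pr_zero[OF chM u(1)] zM u(2)
    by (metis kUU_def)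
  then have zero: "ks K M z = kzero K M z"
    using u by simp
  show ?thesis
    using kZ_kph_reflect[OF weak idx(1) M IM xM] kZ_kph_reflect[OF weak idx(2) M JM yM] zero zy
    by (simp add: z_def)
qed

text \<open>Both $x$ and $y$ represent a point of $F'_I \cap F'_J = F'_{I \cup J}$, so the
coordinate changes of the shrunk atlas are defined at them.\<close>

lemma krel_restrict_disjoint:
  assumes atlas: "tame_atlas X K" and shrink: "tame_shrinking X K U' F'"
    and idx: "I \<in> kIdx K" "J \<in> kIdx K" "I \<union> J \<in> kIdx K" and disjoint: "I \<inter> J = {}"
    and common: "common_image K (I \<union> J) I x J y"
    and x: "x \<in> topspace (kU K I)" "x \<in> U' I" and y: "y \<in> topspace (kU K J)" "y \<in> U' J"
  shows "((I, x), (J, y)) \<in> krel (restrict_atlas K U' F')"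
proof -
  define K' where "K' = restrict_atlas K U' F'"
  define M where "M = I \<union> J"
  define z where "z = kph K I M x"
  have idx': "kIdx K' = kIdx K"
    using tame_shrinkingD(3)[OF shrink] by (simp add: K'_def)
  have M: "M \<in> kIdx K" and IM: "I \<subset> M" and JM: "J \<subset> M"
    using idx disjoint by (auto simp: M_def kIdx_def)
  have xM: "x \<in> kUU K I M" and yM: "y \<in> kUU K J M" and zy: "kph K J M y = z"
    using common by (simp_all add: common_image_def M_def z_def)
  have xZ: "x \<in> kZ K I" and yZ: "y \<in> kZ K J" and psi: "kpsi K I x = kpsi K J y"
    using common_image_disjoint_kZ[OF atlas idx disjoint common] by simp_all
  have "kpsi K I x \<in> kfp K' I" "kpsi K J y \<in> kfp K' J"
    using kZ_restrict_footprint[OF tame_shrinkingD(1)[OF shrink]] idx xZ yZ x y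
    by (simp_all add: K'_def)
  then have "kpsi K I x \<in> kfp K' I \<inter> kfp K' J"
    using psi by simp
  moreover have "kfp K' M = kfp K' I \<inter> kfp K' J"
    by (auto simp: kfp_def M_def)
  moreover have "is_coord_change K' I M"
    using weak_atlas_coord_change[OF tame_atlasD(2)[OF tame_shrinkingD(2)[OF shrink]]] idx M IM
    by (simp add: K'_def tame_shrinkingD(3)[OF shrink])
  ultimately have "x \<in> kUIJ K' I M"
    using xZ x(2) unfolding is_coord_change_def by (auto simp: K'_def kZ_restrict_atlas)
  then have zU: "z \<in> U' M"
    using IM by (auto simp: K'_def z_def kph_def)
  have "x \<in> kUU K' I M" "y \<in> kUU K' J M"
    using xM yM x y zU zy by (simp_all add: K'_def kUU_restrict_atlas z_def)
  then have "((I, x), (M, z)) \<in> kgen K'" "((J, y), (M, z)) \<in> kgen K'"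
    unfolding kgen_def using idx M IM JM idx' zy by (auto simp: K'_def z_def)
  moreover have "(I, x) \<in> kcarrier K'" "(J, y) \<in> kcarrier K'"
    using idx idx' x y by (auto simp: K'_def kcarrier_def)
  ultimately show ?thesis
    unfolding K'_def by (rule krel_kgen_target)
qed

lemma krel_restrict_atlas:
  assumes atlas: "tame_atlas X K" and shrink: "tame_shrinking X K U' F'"
  shows "krel (restrict_atlas K U' F')
    = krel K \<inter> kcarrier (restrict_atlas K U' F') \<times> kcarrier (restrict_atlas K U' F')"
proof
  show "krel (restrict_atlas K U' F')
      \<subseteq> krel K \<inter> kcarrier (restrict_atlas K U' F') \<times> kcarrier (restrict_atlas K U' F')"
    using krel_restrict_atlas_subset[OF tame_shrinkingD(1)[OF shrink]] by (auto simp: krel_def)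
next
  show "krel K \<inter> kcarrier (restrict_atlas K U' F') \<times> kcarrier (restrict_atlas K U' F')
      \<subseteq> krel (restrict_atlas K U' F')"
  proof clarify
    fix I x J y
    assume rel: "((I, x), (J, y)) \<in> krel K"
      and carrier: "(I, x) \<in> kcarrier (restrict_atlas K U' F')"
        "(J, y) \<in> kcarrier (restrict_atlas K U' F')"
    obtain L where idx: "I \<in> kIdx K" "J \<in> kIdx K" "L \<in> kIdx K" and "common_image K L I x J y"
      using krel_common_image[OF atlas rel] by blast
    then have IJ: "I \<union> J \<in> kIdx K" and common: "common_image K (I \<union> J) I x J y"
      using common_image_union[OF atlas] by blast+
    have x: "x \<in> topspace (kU K I)" "x \<in> U' I" and y: "y \<in> topspace (kU K J)" "y \<in> U' J"
      using carrier by (auto simp: kcarrier_def)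
    show "((I, x), (J, y)) \<in> krel (restrict_atlas K U' F')"
    proof (cases "I \<inter> J = {}")
      case True
      show ?thesis
        by (rule krel_restrict_disjoint[OF atlas shrink idx(1,2) IJ True common x y])
    next
      case False
      show ?thesis
        by (rule krel_restrict_overlap[OF atlas shrink idx(1,2) IJ False common x y])
    qed
  qed
qed

theorem mainTheorem12:
  fixes X :: "'x topology" and K :: "('x,'u,'e) katlas"
    and U' :: "nat set \<Rightarrow> 'u set" and F' :: "nat \<Rightarrow> 'x set"
  assumes "compact_space X" and "metrizable_space X"
    and "tame_atlas X K"
    and "tame_shrinking X K U' F'"
  shows "\<exists>\<iota>. (\<forall>p\<in>kcarrier (restrict_atlas K U' F').
                 \<iota> (kpi (restrict_atlas K U' F') p) = kpi K p)
            \<and> inj_on \<iota> (kvirt (restrict_atlas K U' F'))"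
proof -
  have "kcarrier (restrict_atlas K U' F') \<subseteq> kcarrier K"
    using kcarrier_restrict_atlas_subset[OF tame_shrinkingD(1)[OF assms(4)]] .
  from quotient_restrict_inj[OF equiv_krel this] show ?thesis
    unfolding kpi_def kvirt_def krel_restrict_atlas[OF assms(3,4)] .
qed

end
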